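(* Fix $r\geq 3$ and integers $v_1\geq 2r-1$, $v_2\geq r+1$. Let $F_0$ be the $r$-uniform hypergraph on $v_1+v_2$ vertices that is the disjoint union of an $r$-uniform $v_1$-cycle and a complete $r$-uniform hypergraph on $v_2$ vertices. Let $e_1,\ldots,e_m$ be all $r$-subsets of $V(F_0)$ that are not edges of $F_0$, and for $i\in[m]$ let $F_i=F_0\cup\{e_1,\ldots,e_i\}$. Let $F$ be the disjoint union of hypergraphs isomorphic to $F_0,F_1,\ldots,F_m$. Then $s(F)=2$ and $\lim_{n\to\infty}\mathrm{wsat}(K^{(r)}_n,F)/n\in(0,1)$.
   Context: An $r$-uniform $v$-cycle is the hypergraph on $[v]$ whose $v$ edges are the sets of $r$ consecutive elements in the cyclic order $(1,\ldots,v)$. $K^{(r)}_n$ is the complete $r$-uniform hypergraph on $n$ vertices. $\mathrm{wsat}(G,F)$ is the minimum number of edges of a spanning subhypergraph of $G$ from which $G$ can be obtained by adding missing edges one at a time, each added edge creating a new copy of $F$ containing it. The sharpness $s(F)$ is the minimum non-negative integer $s$ such that for some edge $e\in E(F)$ and some $S\subseteq e$ with $|S|=s$, no edge $e'\in E(F)\setminus\{e\}$ contains $S$. *)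

theory Defs
  imports Complex_Main
begin

definition complete_edges :: "nat \<Rightarrow> 'a set \<Rightarrow> 'a set set" where
  "complete_edges r V = {e. e \<subseteq> V \<and> card e = r}"

definition copy_containing :: "'b set \<Rightarrow> 'b set set \<Rightarrow> 'a set set \<Rightarrow> 'a set \<Rightarrow> bool" where
  "copy_containing VF EF H e \<longleftrightarrow>
     (\<exists>\<phi>. inj_on \<phi> VF \<and> (\<forall>f\<in>EF. \<phi> ` f \<in> H) \<and> (\<exists>f\<in>EF. \<phi> ` f = e))"

definition weakly_saturated :: "'a set set \<Rightarrow> 'a set set \<Rightarrow> 'b set \<Rightarrow> 'b set set \<Rightarrow> bool" where
  "weakly_saturated EG H VF EF \<longleftrightarrow> H \<subseteq> EG \<and>
     (\<exists>es. distinct es \<and> set es = EG - H \<and>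
        (\<forall>i<length es. copy_containing VF EF (H \<union> set (take (Suc i) es)) (es ! i)))"

definition wsat :: "nat \<Rightarrow> nat \<Rightarrow> 'b set \<Rightarrow> 'b set set \<Rightarrow> nat" where
  "wsat r n VF EF = Min {card H | H. weakly_saturated (complete_edges r {..<n}) H VF EF}"

definition sharpness :: "'b set set \<Rightarrow> nat" where
  "sharpness EF = (LEAST s. \<exists>e\<in>EF. \<exists>S\<subseteq>e. card S = s \<and> (\<forall>e'\<in>EF - {e}. \<not> S \<subseteq> e'))"

definition cycle_edges :: "nat \<Rightarrow> nat \<Rightarrow> nat set set" where
  "cycle_edges r v = {{(i + j) mod v | j. j < r} | i. i < v}"

definition F0_edges :: "nat \<Rightarrow> nat \<Rightarrow> nat \<Rightarrow> nat set set" where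
  "F0_edges r v1 v2 = cycle_edges r v1 \<union> complete_edges r {v1..<v1 + v2}"

text \<open>Given the enumeration es = [e_1,...,e_m] of the non-edges, F_i = F_0 plus e_1..e_i.\<close>
definition Fi_edges :: "nat \<Rightarrow> nat \<Rightarrow> nat \<Rightarrow> nat set list \<Rightarrow> nat \<Rightarrow> nat set set" where
  "Fi_edges r v1 v2 es i = F0_edges r v1 v2 \<union> set (take i es)"

text \<open>Disjoint union of F_0,...,F_m: the i-th copy lives on {i} \<times> {0..<v1+v2}.\<close>
definition bigF_vertices :: "nat \<Rightarrow> nat \<Rightarrow> nat set list \<Rightarrow> (nat \<times> nat) set" where
  "bigF_vertices v1 v2 es = {0..length es} \<times> {..<v1 + v2}"

definition bigF_edges :: "nat \<Rightarrow> nat \<Rightarrow> nat \<Rightarrow> nat set list \<Rightarrow> (nat \<times> nat) set set" where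
  "bigF_edges r v1 v2 es =
     (\<Union>i\<in>{0..length es}. (\<lambda>e. Pair i ` e) ` Fi_edges r v1 v2 es i)"

end

(*
  Every vertex of F lies in two edges of F, so no edge of F is singled out by fewer than two of its
  vertices, while the pair {0, r - 1} of the first cycle edge of F_0 lies in no other edge; hence
  s(F) = 2. The same degree condition shows that an edge creating a new copy of F never contains a
  vertex not covered before, so a weakly saturated subgraph of K_n covers all n vertices and
  wsat(n) >= n / r.

  Conversely, in the presence of a clique on at least |V(F)| vertices the images of the non-edges
  e_1, ..., e_m of F_0 under any embedding of F_0 can be added in this order: when the image of e_j
  is added, the embedding is a copy of F_j, and the other components of F fit into the clique.
  As every r-set of two disjoint cliques lies in the image of such an embedding (cycle in one clique,
  K_v2 in the other), wsat is subadditive beyond |V(F)|, and wsat(n) / n converges by Fekete's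
  lemma. Finally, a clique on a vertices together with a disjoint v1-cycle missing one edge
  generates the complete graph on a + v1 vertices, so wsat(a + v1) <= wsat(a) + v1 - 1; iterating
  gives wsat(n) < n for some n beyond |V(F)|, which puts the limit below 1.
*)
theory Submission
  imports Defs
begin

section \<open>Weak saturation as a closure process\<close>

definition embedding :: "'b set \<Rightarrow> 'b set set \<Rightarrow> 'a set set \<Rightarrow> ('b \<Rightarrow> 'a) \<Rightarrow> bool" where
  "embedding VF EF G \<phi> \<longleftrightarrow> inj_on \<phi> VF \<and> (\<forall>f\<in>EF. \<phi> ` f \<in> G)"

lemma copy_containing_iff:
  "copy_containing VF EF G e \<longleftrightarrow> (\<exists>\<phi>. embedding VF EF G \<phi> \<and> (\<exists>f\<in>EF. \<phi> ` f = e))"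
  unfolding copy_containing_def embedding_def by blast

lemma copy_containing_mono:
  "copy_containing VF EF G e \<Longrightarrow> G \<subseteq> G' \<Longrightarrow> copy_containing VF EF G' e"
  unfolding copy_containing_def by blast

lemma copy_containing_image:
  assumes "inj h" and "copy_containing VF EF G e"
  shows "copy_containing VF EF (image h ` G) (h ` e)"
proof -
  obtain \<phi> f where "inj_on \<phi> VF" "\<forall>f\<in>EF. \<phi> ` f \<in> G" "f \<in> EF" "\<phi> ` f = e"
    using assms(2) unfolding copy_containing_def by blast
  then show ?thesis
    unfolding copy_containing_def using assms(1)
    by (intro exI[of _ "h \<circ> \<phi>"]) (auto simp: comp_inj_on inj_on_subset image_comp)
qed

inductive saturates_to :: "'b set \<Rightarrow> 'b set set \<Rightarrow> 'a set set \<Rightarrow> 'a set set \<Rightarrow> bool"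
  for VF EF H where
  refl: "saturates_to VF EF H H"
| step: "saturates_to VF EF H G \<Longrightarrow> copy_containing VF EF (insert e G) e
    \<Longrightarrow> saturates_to VF EF H (insert e G)"

lemma saturates_to_subset: "saturates_to VF EF H G \<Longrightarrow> H \<subseteq> G"
  by (induction rule: saturates_to.induct) auto

lemma saturates_to_trans:
  assumes "saturates_to VF EF H G" and "saturates_to VF EF G K"
  shows "saturates_to VF EF H K"
  using assms(2,1) by (induction rule: saturates_to.induct) (auto intro: saturates_to.step)

lemma saturates_to_Un:
  "saturates_to VF EF H G \<Longrightarrow> saturates_to VF EF (H \<union> J) (G \<union> J)"
proof (induction rule: saturates_to.induct)
  case refl
  show ?case by (rule saturates_to.refl)
next
  case (step G e)
  have "copy_containing VF EF (insert e (G \<union> J)) e"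
    using step.hyps(2) by (rule copy_containing_mono) auto
  from saturates_to.step[OF step.IH this] show ?case by simp
qed

lemma saturates_to_insert_set:
  assumes "finite E" and "\<And>e. e \<in> E \<Longrightarrow> copy_containing VF EF (insert e G) e"
  shows "saturates_to VF EF G (G \<union> E)"
  using assms
proof (induction E rule: finite_induct)
  case empty
  show ?case by (simp add: saturates_to.refl)
next
  case (insert e E)
  have "copy_containing VF EF (insert e (G \<union> E)) e"
    using insert.prems[of e] by (rule copy_containing_mono) auto
  from saturates_to.step[OF insert.IH this] insert.prems show ?case by simp
qed

lemma saturates_to_image:
  assumes "inj h" and "saturates_to VF EF H G"
  shows "saturates_to VF EF (image h ` H) (image h ` G)"
  using assms(2)
proof (induction rule: saturates_to.induct)
  case refl
  show ?case by (rule saturates_to.refl)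
next
  case (step G e)
  have "copy_containing VF EF (insert (h ` e) (image h ` G)) (h ` e)"
    using copy_containing_image[OF assms(1) step.hyps(2)] by simp
  from saturates_to.step[OF step.IH this] show ?case by simp
qed

lemma saturates_to_imp_ordering:
  assumes "saturates_to VF EF H G"
  shows "\<exists>es. distinct es \<and> set es = G - H \<and>
    (\<forall>i<length es. copy_containing VF EF (H \<union> set (take (Suc i) es)) (es ! i))"
  using assms
proof (induction rule: saturates_to.induct)
  case refl
  show ?case by (intro exI[of _ "[]"]) auto
next
  case (step G e)
  then obtain es where "distinct es" "set es = G - H"
    and copies: "\<forall>i<length es. copy_containing VF EF (H \<union> set (take (Suc i) es)) (es ! i)"
    by blast
  have "H \<subseteq> G" using step.hyps(1) by (rule saturates_to_subset)
  show ?case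
  proof (cases "e \<in> G")
    case True
    then show ?thesis using step.IH by (simp add: insert_absorb)
  next
    case False
    with Un_absorb1[OF \<open>H \<subseteq> G\<close>] \<open>set es = G - H\<close> step.hyps(2) copies
    have "\<forall>i<length (es @ [e]).
        copy_containing VF EF (H \<union> set (take (Suc i) (es @ [e]))) ((es @ [e]) ! i)"
      by (auto simp: nth_append less_Suc_eq Un_Diff_cancel insert_absorb)
    with False \<open>H \<subseteq> G\<close> \<open>distinct es\<close> \<open>set es = G - H\<close> show ?thesis
      by (intro exI[of _ "es @ [e]"]) auto
  qed
qed

lemma saturates_to_take:
  assumes copies: "\<forall>i<length es. copy_containing VF EF (H \<union> set (take (Suc i) es)) (es ! i)"
    and "i \<le> length es"
  shows "saturates_to VF EF H (H \<union> set (take i es))"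
  using assms(2)
proof (induction i)
  case 0
  show ?case by (simp add: saturates_to.refl)
next
  case (Suc i)
  then have "H \<union> set (take (Suc i) es) = insert (es ! i) (H \<union> set (take i es))"
    by (auto simp: take_Suc_conv_app_nth)
  with Suc saturates_to.step copies show ?case by (metis Suc_le_lessD less_imp_le)
qed

lemma weakly_saturated_iff:
  "weakly_saturated EG H VF EF \<longleftrightarrow> saturates_to VF EF H EG"
proof
  assume "weakly_saturated EG H VF EF"
  then obtain es where "H \<subseteq> EG" "set es = EG - H"
    and "\<forall>i<length es. copy_containing VF EF (H \<union> set (take (Suc i) es)) (es ! i)"
    unfolding weakly_saturated_def by blast
  with saturates_to_take[of es VF EF H "length es"] show "saturates_to VF EF H EG"
    by (simp add: Un_absorb1 Un_Diff_cancel)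
next
  assume "saturates_to VF EF H EG"
  with saturates_to_subset[OF this] saturates_to_imp_ordering[OF this]
  show "weakly_saturated EG H VF EF" unfolding weakly_saturated_def by simp
qed

lemma finite_complete_edges: "finite V \<Longrightarrow> finite (complete_edges r V)"
  unfolding complete_edges_def by (auto intro: finite_subset[of _ "Pow V"])

lemma complete_edges_mono: "V \<subseteq> W \<Longrightarrow> complete_edges r V \<subseteq> complete_edges r W"
  unfolding complete_edges_def by auto

lemma image_complete_edges:
  "inj_on h V \<Longrightarrow> f \<in> complete_edges r V \<Longrightarrow> h ` f \<in> complete_edges r (h ` V)"
  unfolding complete_edges_def by (auto simp: card_image inj_on_subset)

lemma complete_edges_image:
  assumes "inj h"
  shows "complete_edges r (h ` V) = image h ` complete_edges r V"
proof
  show "image h ` complete_edges r V \<subseteq> complete_edges r (h ` V)"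
    using assms by (auto intro: image_complete_edges inj_on_subset)
  show "complete_edges r (h ` V) \<subseteq> image h ` complete_edges r V"
  proof
    fix e assume "e \<in> complete_edges r (h ` V)"
    then obtain U where "U \<subseteq> V" "e = h ` U" "card e = r"
      unfolding complete_edges_def by (auto simp: subset_image_iff)
    with assms show "e \<in> image h ` complete_edges r V"
      unfolding complete_edges_def by (auto simp: card_image inj_on_subset)
  qed
qed

lemma Union_complete_edges:
  assumes "finite V" and "0 < r" and "r \<le> card V"
  shows "\<Union> (complete_edges r V) = V"
proof
  show "\<Union> (complete_edges r V) \<subseteq> V" unfolding complete_edges_def by blast
  show "V \<subseteq> \<Union> (complete_edges r V)"
  proof
    fix x assume "x \<in> V"
    with assms obtain e where "{x} \<subseteq> e" "e \<subseteq> V" "card e = r"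
      using exists_subset_between[of "{x}" r V] by auto
    then show "x \<in> \<Union> (complete_edges r V)" unfolding complete_edges_def by blast
  qed
qed

lemma
  shows wsat_attained:
      "\<exists>H. weakly_saturated (complete_edges r {..<n}) H VF EF \<and> card H = wsat r n VF EF"
    and wsat_le:
      "weakly_saturated (complete_edges r {..<n}) H VF EF \<Longrightarrow> wsat r n VF EF \<le> card H"
proof -
  define W where "W = {card H | H. weakly_saturated (complete_edges r {..<n}) H VF EF}"
  have "weakly_saturated (complete_edges r {..<n}) (complete_edges r {..<n}) VF EF"
    by (simp add: weakly_saturated_iff saturates_to.refl)
  then have "W \<noteq> {}" unfolding W_def by blast
  moreover have "finite W"
  proof (rule finite_subset)
    show "W \<subseteq> card ` Pow (complete_edges r {..<n})"
      unfolding W_def weakly_saturated_def by auto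
  qed (simp add: finite_complete_edges)
  ultimately have "Min W \<in> W" by (rule Min_in[rotated])
  then show "\<exists>H. weakly_saturated (complete_edges r {..<n}) H VF EF \<and> card H = wsat r n VF EF"
    unfolding wsat_def W_def by auto
  show "weakly_saturated (complete_edges r {..<n}) H VF EF \<Longrightarrow> wsat r n VF EF \<le> card H"
    unfolding wsat_def using \<open>finite W\<close> by (auto simp: W_def intro: Min_le)
qed

section \<open>Hypergraphs of minimum degree two\<close>

text \<open>An edge creating a new copy of F never contains an uncovered vertex: the copy has a second
  edge through that vertex, and that edge is already present.\<close>

lemma saturates_to_Union_subset:
  assumes edges: "\<And>f. f \<in> EF \<Longrightarrow> f \<subseteq> VF"
    and degree: "\<And>f w. f \<in> EF \<Longrightarrow> w \<in> f \<Longrightarrow> \<exists>f'\<in>EF. f' \<noteq> f \<and> w \<in> f'"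
    and "saturates_to VF EF H G"
  shows "\<Union> G \<subseteq> \<Union> H"
  using assms(3)
proof (induction rule: saturates_to.induct)
  case refl
  show ?case by simp
next
  case (step G e)
  obtain \<phi> f where \<phi>: "inj_on \<phi> VF" "\<forall>f\<in>EF. \<phi> ` f \<in> insert e G" and "f \<in> EF" "\<phi> ` f = e"
    using step.hyps(2) unfolding copy_containing_def by blast
  have "x \<in> \<Union> G" if "x \<in> e" for x
  proof -
    from that \<open>\<phi> ` f = e\<close> obtain w where "w \<in> f" "\<phi> w = x" by blast
    with degree[OF \<open>f \<in> EF\<close>] obtain f' where "f' \<in> EF" "f' \<noteq> f" "w \<in> f'" by blast
    have "\<phi> ` f' \<noteq> e"
      using \<open>\<phi> ` f = e\<close> \<open>f' \<noteq> f\<close> inj_on_image_eq_iff[OF \<phi>(1)] edges \<open>f \<in> EF\<close> \<open>f' \<in> EF\<close>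
      by metis
    with \<phi>(2) \<open>f' \<in> EF\<close> have "\<phi> ` f' \<in> G" by blast
    with \<open>w \<in> f'\<close> \<open>\<phi> w = x\<close> show ?thesis by blast
  qed
  with step.IH show ?case by blast
qed

lemma weakly_saturated_card_ge:
  assumes edges: "\<And>f. f \<in> EF \<Longrightarrow> f \<subseteq> VF"
    and degree: "\<And>f w. f \<in> EF \<Longrightarrow> w \<in> f \<Longrightarrow> \<exists>f'\<in>EF. f' \<noteq> f \<and> w \<in> f'"
    and "0 < r" "r \<le> n"
    and ws: "weakly_saturated (complete_edges r {..<n}) H VF EF"
  shows "n \<le> r * card H"
proof -
  have "H \<subseteq> complete_edges r {..<n}"
    using ws unfolding weakly_saturated_def by blast
  then have H: "finite H" "\<And>e. e \<in> H \<Longrightarrow> card e = r"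
    by (auto simp: complete_edges_def intro: finite_subset finite_complete_edges)
  have "{..<n} = \<Union> (complete_edges r {..<n})"
    using \<open>0 < r\<close> \<open>r \<le> n\<close> by (simp add: Union_complete_edges)
  also have "\<dots> \<subseteq> \<Union> H"
    using ws saturates_to_Union_subset[OF edges degree] by (simp add: weakly_saturated_iff)
  finally have "{..<n} \<subseteq> \<Union> H" .
  moreover have "finite (\<Union> H)"
    using H \<open>0 < r\<close> by (intro finite_Union) (auto intro: card_ge_0_finite)
  ultimately have "n \<le> card (\<Union> H)" using card_mono[of "\<Union> H" "{..<n}"] by simp
  also have "\<dots> \<le> (\<Sum>e\<in>H. card e)" by (rule card_Union_le_sum_card)
  also have "\<dots> = r * card H" using H by simp
  finally show ?thesis .
qed

lemma sharpness_eq_2: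
  assumes edges: "\<And>f. f \<in> EF \<Longrightarrow> finite f \<and> f \<noteq> {}"
    and degree: "\<And>f w. f \<in> EF \<Longrightarrow> w \<in> f \<Longrightarrow> \<exists>f'\<in>EF. f' \<noteq> f \<and> w \<in> f'"
    and "e \<in> EF" "S \<subseteq> e" "card S = 2" "\<forall>e'\<in>EF - {e}. \<not> S \<subseteq> e'"
  shows "sharpness EF = 2"
  unfolding sharpness_def
proof (rule Least_equality)
  show "\<exists>e\<in>EF. \<exists>S\<subseteq>e. card S = 2 \<and> (\<forall>e'\<in>EF - {e}. \<not> S \<subseteq> e')"
    using assms(3-) by blast
next
  fix s assume "\<exists>e\<in>EF. \<exists>S\<subseteq>e. card S = s \<and> (\<forall>e'\<in>EF - {e}. \<not> S \<subseteq> e')"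
  then obtain e S where "e \<in> EF" "S \<subseteq> e" "card S = s" and unique: "\<forall>e'\<in>EF - {e}. \<not> S \<subseteq> e'"
    by blast
  show "2 \<le> s"
  proof (rule ccontr)
    assume "\<not> 2 \<le> s"
    have "finite S" using edges[OF \<open>e \<in> EF\<close>] \<open>S \<subseteq> e\<close> finite_subset by blast
    with \<open>card S = s\<close> \<open>\<not> 2 \<le> s\<close> have "S = {} \<or> (\<exists>w. S = {w})"
      by (metis One_nat_def card_1_singletonE card_0_eq less_2_cases not_le)
    then obtain w where "w \<in> e" "S \<subseteq> {w}"
      using edges[OF \<open>e \<in> EF\<close>] \<open>S \<subseteq> e\<close> by blast
    with degree[OF \<open>e \<in> EF\<close>] unique show False by blast
  qed
qed

section \<open>Fekete's lemma\<close>

lemma subadditive_mult_add: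
  fixes f :: "nat \<Rightarrow> real"
  assumes sub: "\<And>a b. N \<le> a \<Longrightarrow> N \<le> b \<Longrightarrow> f (a + b) \<le> f a + f b"
    and "N \<le> p" "N \<le> s"
  shows "f (q * p + s) \<le> q * f p + f s"
proof (induction q)
  case (Suc q)
  have "f (Suc q * p + s) \<le> f p + f (q * p + s)"
    using sub[of p "q * p + s"] assms(2,3) by (simp add: add.assoc)
  with Suc.IH show ?case by (simp add: algebra_simps)
qed simp

lemma Fekete_subadditive:
  fixes f :: "nat \<Rightarrow> real"
  assumes "0 < N" and nonneg: "\<And>n. 0 \<le> f n"
    and sub: "\<And>a b. N \<le> a \<Longrightarrow> N \<le> b \<Longrightarrow> f (a + b) \<le> f a + f b"
  shows "\<exists>L. (\<lambda>n. f n / n) \<longlonglongrightarrow> L \<and> (\<forall>n\<ge>N. L \<le> f n / n)"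
proof (intro exI conjI allI impI)
  define g where "g n = f n / n" for n
  define L where "L = Inf (g ` {N..})"
  have "bdd_below (g ` {N..})" using nonneg by (auto simp: g_def intro: bdd_belowI[of _ 0])
  then show L_le: "L \<le> f n / n" if "N \<le> n" for n
    unfolding L_def g_def using that by (auto intro: cInf_lower)
  show "(\<lambda>n. f n / n) \<longlonglongrightarrow> L"
  proof (rule LIMSEQ_I)
    fix \<epsilon> :: real assume "0 < \<epsilon>"
    obtain p where p: "N \<le> p" "g p < L + \<epsilon> / 2"
      using cInf_lessD[of "g ` {N..}" "L + \<epsilon> / 2"] \<open>0 < \<epsilon>\<close> unfolding L_def by auto
    define M where "M = (\<Sum>s\<in>{N..<N + p}. f s)"
    have M: "f s \<le> M" if "s \<in> {N..<N + p}" for s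
      unfolding M_def using that nonneg by (intro member_le_sum) auto
    have "g n < L + \<epsilon>" if n: "n \<ge> N + nat \<lceil>2 * M / \<epsilon>\<rceil> + 1" for n
    proof -
      define q where "q = (n - N) div p"
      define s where "s = N + (n - N) mod p"
      have "n = q * p + s" "s \<in> {N..<N + p}" and "0 < p" "0 < n"
        using n p(1) \<open>0 < N\<close> by (auto simp: q_def s_def)
      have "f n \<le> q * f p + M"
        using subadditive_mult_add[OF sub p(1), of s q] M[OF \<open>s \<in> _\<close>] \<open>n = q * p + s\<close> \<open>s \<in> _\<close>
        by simp
      also have "q * f p = q * p * g p" using \<open>0 < p\<close> by (simp add: g_def)
      also have "\<dots> \<le> n * g p"
        using \<open>n = q * p + s\<close> nonneg by (intro mult_right_mono) (auto simp: g_def)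
      finally have "g n \<le> g p + M / n" using \<open>0 < n\<close> by (simp add: g_def field_simps)
      moreover have "M / n < \<epsilon> / 2"
      proof -
        have "2 * M / \<epsilon> < n" using n by linarith
        with \<open>0 < \<epsilon>\<close> \<open>0 < n\<close> show ?thesis by (simp add: field_simps)
      qed
      ultimately show ?thesis using p(2) by linarith
    qed
    then show "\<exists>n0. \<forall>n\<ge>n0. norm (f n / n - L) < \<epsilon>"
      using L_le by (fastforce simp: g_def)
  qed
qed

section \<open>Gluing injections\<close>

lemma exists_inj_on_lessThan_covering:
  assumes "finite P" "S \<subseteq> P" "card S \<le> n" "n \<le> card P"
  shows "\<exists>\<alpha>. inj_on \<alpha> {..<n} \<and> S \<subseteq> \<alpha> ` {..<n} \<and> \<alpha> ` {..<n} \<subseteq> P"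
proof -
  obtain T where "S \<subseteq> T" "T \<subseteq> P" "card T = n"
    using exists_subset_between[OF assms(3,4,2,1)] by blast
  moreover obtain \<alpha> where "bij_betw \<alpha> {0..<card T} T"
    using ex_bij_betw_nat_finite finite_subset[OF \<open>T \<subseteq> P\<close> \<open>finite P\<close>] by blast
  ultimately show ?thesis by (intro exI[of _ \<alpha>]) (auto simp: bij_betw_def atLeast0LessThan)
qed

lemma shift_lessThan: "(+) a ` {..<b} = {a..<a + b :: nat}"
  by (simp add: lessThan_atLeast0 add.commute)

definition join_maps :: "nat \<Rightarrow> (nat \<Rightarrow> 'a) \<Rightarrow> (nat \<Rightarrow> 'a) \<Rightarrow> nat \<Rightarrow> 'a" where
  "join_maps n \<alpha> \<beta> x = (if x < n then \<alpha> x else \<beta> (x - n))"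

lemma join_maps_image_low: "X \<subseteq> {..<n} \<Longrightarrow> join_maps n \<alpha> \<beta> ` X = \<alpha> ` X"
  unfolding join_maps_def by (auto intro!: image_cong)

lemma join_maps_image_high: "join_maps n \<alpha> \<beta> ` {n..<n + m} = \<beta> ` {..<m}"
proof -
  have "{n..<n + m} = (\<lambda>x. x + n) ` {..<m}"
    by (simp add: lessThan_atLeast0 add.commute)
  then have "join_maps n \<alpha> \<beta> ` {n..<n + m} = (\<lambda>x. join_maps n \<alpha> \<beta> (x + n)) ` {..<m}"
    by (simp add: image_image)
  then show ?thesis by (simp add: join_maps_def)
qed

lemma join_maps_image: "join_maps n \<alpha> \<beta> ` {..<n + m} = \<alpha> ` {..<n} \<union> \<beta> ` {..<m}"
proof -
  have "{..<n + m} = {..<n} \<union> {n..<n + m}" by auto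
  then show ?thesis by (simp add: image_Un join_maps_image_low join_maps_image_high)
qed

lemma inj_on_join_maps:
  assumes "inj_on \<alpha> {..<n}" "inj_on \<beta> {..<m}" "\<alpha> ` {..<n} \<inter> \<beta> ` {..<m} = {}"
  shows "inj_on (join_maps n \<alpha> \<beta>) {..<n + m}"
proof -
  have "inj_on (join_maps n \<alpha> \<beta>) {n..<n + m}"
  proof (rule inj_onI)
    fix x y assume "x \<in> {n..<n + m}" "y \<in> {n..<n + m}" "join_maps n \<alpha> \<beta> x = join_maps n \<alpha> \<beta> y"
    then have "x - n < m" "y - n < m" "\<beta> (x - n) = \<beta> (y - n)" "n \<le> x" "n \<le> y"
      by (auto simp: join_maps_def)
    with assms(2) have "x - n = y - n" by (simp add: inj_on_def)
    with \<open>n \<le> x\<close> \<open>n \<le> y\<close> show "x = y" by simp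
  qed
  moreover have "inj_on (join_maps n \<alpha> \<beta>) {..<n}"
    using assms(1) by (auto simp: join_maps_def inj_on_def)
  moreover have "{..<n} \<inter> {n..<n + m} = {}" "{n..<n + m} \<inter> {..<n} = {}"
    "{..<n + m} = {..<n} \<union> {n..<n + m}" by auto
  ultimately show ?thesis
    using assms(3) by (simp add: inj_on_Un join_maps_image_low join_maps_image_high Diff_triv)
qed

section \<open>Cycles and cliques\<close>

lemma mod_less_double: "a < 2 * v \<Longrightarrow> a mod v = (if a < v then a else a - (v::nat))"
  by (simp add: le_mod_geq)

lemma add_mod_cancel_left:
  fixes t i j v :: nat
  assumes "(t + i) mod v = (t + j) mod v" "t < v" "i < v" "j < v"
  shows "i = j"
  using assms mod_less_double[of "t + i" v] mod_less_double[of "t + j" v]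
  by (auto split: if_splits)

definition cycle_edge :: "nat \<Rightarrow> nat \<Rightarrow> nat \<Rightarrow> nat set" where
  "cycle_edge r v t = (\<lambda>j. (t + j) mod v) ` {..<r}"

lemma cycle_edges_eq: "cycle_edges r v = cycle_edge r v ` {..<v}"
  unfolding cycle_edges_def cycle_edge_def by auto

lemma mem_cycle_edge: "x \<in> cycle_edge r v t \<longleftrightarrow> (\<exists>j<r. x = (t + j) mod v)"
  unfolding cycle_edge_def by auto

lemma cycle_edge_complete:
  assumes "t < v" "r \<le> v"
  shows "cycle_edge r v t \<in> complete_edges r {..<v}"
proof -
  have "inj_on (\<lambda>j. (t + j) mod v) {..<r}"
  proof (rule inj_onI)
    fix i j assume "i \<in> {..<r}" "j \<in> {..<r}" "(t + i) mod v = (t + j) mod v"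
    with assms show "i = j" by (intro add_mod_cancel_left[of t i v j]) auto
  qed
  then show ?thesis
    using assms by (auto simp: complete_edges_def cycle_edge_def card_image)
qed

lemma cycle_edges_complete: "r \<le> v \<Longrightarrow> cycle_edges r v \<subseteq> complete_edges r {..<v}"
  by (auto simp: cycle_edges_eq cycle_edge_complete)

lemma cycle_two_edges:
  assumes "2 \<le> r" "r < v" "x < v"
  shows "\<exists>f1\<in>cycle_edges r v. \<exists>f2\<in>cycle_edges r v. f1 \<noteq> f2 \<and> x \<in> f1 \<and> x \<in> f2"
proof -
  define t where "t = (x + (v - 1)) mod v"
  have "t < v" using assms by (simp add: t_def)
  have "x \<in> cycle_edge r v x" "t \<in> cycle_edge r v t"
    using assms \<open>t < v\<close> by (auto simp: mem_cycle_edge intro!: exI[of _ 0])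
  moreover have "x \<in> cycle_edge r v t"
  proof -
    have "(t + 1) mod v = (x + (v - 1) + 1) mod v" unfolding t_def by (rule mod_add_left_eq)
    also have "\<dots> = x" using assms by simp
    finally show ?thesis using assms by (auto simp: mem_cycle_edge intro!: exI[of _ 1])
  qed
  moreover have "t \<notin> cycle_edge r v x"
  proof
    assume "t \<in> cycle_edge r v x"
    then obtain j where "j < r" "(x + (v - 1)) mod v = (x + j) mod v"
      by (auto simp: mem_cycle_edge t_def)
    then have "v - 1 = j" using add_mod_cancel_left[of x "v - 1" v j] assms by simp
    with \<open>j < r\<close> assms show False by simp
  qed
  ultimately show ?thesis
    using assms \<open>t < v\<close> unfolding cycle_edges_eq by blast
qed

text \<open>This is where v \<ge> 2r - 1 is needed: on a shorter cycle an edge wrapping around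
  the end would contain both 0 and r - 1 as well.\<close>

lemma cycle_edge_pair_unique:
  assumes "2 * r - 1 \<le> v" "t < v" "0 \<in> cycle_edge r v t" "r - 1 \<in> cycle_edge r v t"
  shows "t = 0"
proof -
  obtain i j where "i < r" "(t + i) mod v = 0" "j < r" "(t + j) mod v = r - 1"
    using assms(3,4) unfolding mem_cycle_edge by metis
  moreover from calculation have "t + i < 2 * v" "t + j < 2 * v" using assms by linarith+
  ultimately show ?thesis
    using assms mod_less_double[of "t + i" v] mod_less_double[of "t + j" v]
    by (simp split: if_splits)
qed

lemma complete_two_edges:
  assumes "finite Y" "x \<in> Y" "2 \<le> r" "r < card Y"
  shows "\<exists>f1\<in>complete_edges r Y. \<exists>f2\<in>complete_edges r Y. f1 \<noteq> f2 \<and> x \<in> f1 \<and> x \<in> f2"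
proof -
  obtain S where S: "{x} \<subseteq> S" "S \<subseteq> Y" "card S = r + 1"
    using exists_subset_between[of "{x}" "r + 1" Y] assms by auto
  then have "finite S" using assms(1) finite_subset by blast
  have "2 \<le> card (S - {x})" using S assms(3) by simp
  then obtain T where "T \<subseteq> S - {x}" "card T = 2"
    by (meson obtain_subset_with_card_n)
  then obtain a b where ab: "a \<in> S - {x}" "b \<in> S - {x}" "a \<noteq> b"
    unfolding card_2_iff by blast
  then have "card (S - {a}) = r" "card (S - {b}) = r"
    using S \<open>finite S\<close> by (simp_all add: card_Diff_singleton)
  then have "S - {a} \<in> complete_edges r Y" "S - {b} \<in> complete_edges r Y"
    using S by (auto simp: complete_edges_def)
  moreover have "S - {a} \<noteq> S - {b}" "x \<in> S - {a}" "x \<in> S - {b}" using S ab by auto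
  ultimately show ?thesis by meson
qed

section \<open>The disjoint union F of F_0, ..., F_m\<close>

locale cycle_clique_family =
  fixes r v1 v2 :: nat and es :: "nat set list"
  assumes r_ge_2: "2 \<le> r" and v1_ge: "2 * r - 1 \<le> v1" and v2_ge: "r + 1 \<le> v2"
    and set_es: "set es = complete_edges r {..<v1 + v2} - F0_edges r v1 v2"
begin

abbreviation F0 where "F0 \<equiv> F0_edges r v1 v2"
abbreviation V_F where "V_F \<equiv> bigF_vertices v1 v2 es"
abbreviation E_F where "E_F \<equiv> bigF_edges r v1 v2 es"

lemma r_less_v1: "r < v1"
  using r_ge_2 v1_ge by linarith

lemma card_bigF_vertices: "card V_F = (length es + 1) * (v1 + v2)"
  by (simp add: bigF_vertices_def card_cartesian_product)

lemma F0_edges_complete: "F0 \<subseteq> complete_edges r {..<v1 + v2}"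
proof -
  have "cycle_edges r v1 \<subseteq> complete_edges r {..<v1}" using r_less_v1 by (intro cycle_edges_complete) simp
  also have "\<dots> \<subseteq> complete_edges r {..<v1 + v2}" by (rule complete_edges_mono) auto
  moreover have "complete_edges r {v1..<v1 + v2} \<subseteq> complete_edges r {..<v1 + v2}"
    by (rule complete_edges_mono) auto
  ultimately show ?thesis unfolding F0_edges_def by blast
qed

lemma Fi_edges_complete: "Fi_edges r v1 v2 es i \<subseteq> complete_edges r {..<v1 + v2}"
  unfolding Fi_edges_def using F0_edges_complete set_es set_take_subset by fastforce

lemma F0_two_edges:
  assumes "x < v1 + v2"
  shows "\<exists>f1\<in>F0. \<exists>f2\<in>F0. f1 \<noteq> f2 \<and> x \<in> f1 \<and> x \<in> f2"
proof (cases "x < v1")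
  case True
  then obtain f1 f2 where "f1 \<in> cycle_edges r v1" "f2 \<in> cycle_edges r v1" "f1 \<noteq> f2" "x \<in> f1" "x \<in> f2"
    using cycle_two_edges[of r v1 x] r_ge_2 r_less_v1 by meson
  then show ?thesis unfolding F0_edges_def by (meson UnI1)
next
  case False
  then obtain f1 f2 where "f1 \<in> complete_edges r {v1..<v1 + v2}" "f2 \<in> complete_edges r {v1..<v1 + v2}"
    "f1 \<noteq> f2" "x \<in> f1" "x \<in> f2"
    using complete_two_edges[of "{v1..<v1 + v2}" x r] assms r_ge_2 v2_ge by auto
  then show ?thesis unfolding F0_edges_def by (meson UnI2)
qed

lemma mem_bigF_edges:
  "e \<in> E_F \<longleftrightarrow> (\<exists>i\<le>length es. \<exists>h\<in>Fi_edges r v1 v2 es i. e = Pair i ` h)"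
  unfolding bigF_edges_def by fastforce

lemma bigF_edge_complete:
  assumes "e \<in> E_F"
  shows "e \<subseteq> V_F" "finite e" "card e = r"
proof -
  obtain i h where "i \<le> length es" "h \<in> complete_edges r {..<v1 + v2}" "e = Pair i ` h"
    using assms Fi_edges_complete unfolding mem_bigF_edges by blast
  then show "e \<subseteq> V_F" "finite e" "card e = r"
    by (auto simp: complete_edges_def bigF_vertices_def card_image finite_subset inj_on_def)
qed

lemma bigF_two_edges:
  assumes "e \<in> E_F" "w \<in> e"
  shows "\<exists>e'\<in>E_F. e' \<noteq> e \<and> w \<in> e'"
proof -
  obtain i h x where i: "i \<le> length es" "h \<in> Fi_edges r v1 v2 es i" "e = Pair i ` h"
    and "x \<in> h" "w = (i, x)"
    using assms unfolding mem_bigF_edges by blast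
  then have "h \<in> complete_edges r {..<v1 + v2}" using Fi_edges_complete by blast
  with \<open>x \<in> h\<close> have "x < v1 + v2" by (auto simp: complete_edges_def)
  then obtain f1 f2 where "f1 \<in> F0" "f2 \<in> F0" "f1 \<noteq> f2" "x \<in> f1" "x \<in> f2"
    using F0_two_edges by blast
  then have "Pair i ` f1 \<in> E_F" "Pair i ` f2 \<in> E_F" "Pair i ` f1 \<noteq> Pair i ` f2"
    "w \<in> Pair i ` f1" "w \<in> Pair i ` f2"
    using i \<open>w = (i, x)\<close> by (auto simp: mem_bigF_edges Fi_edges_def)
  then show ?thesis by (cases "Pair i ` f1 = e") blast+
qed

lemma bigF_edge_containing_pair:
  assumes "e \<in> E_F" "(0, 0) \<in> e" "(0, r - 1) \<in> e"
  shows "e = Pair 0 ` cycle_edge r v1 0"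
proof -
  obtain i h where "h \<in> Fi_edges r v1 v2 es i" "e = Pair i ` h"
    using assms(1) unfolding mem_bigF_edges by blast
  with assms(2,3) have "i = 0" "0 \<in> h" "r - 1 \<in> h" by auto
  with \<open>h \<in> Fi_edges r v1 v2 es i\<close> have "h \<in> cycle_edges r v1"
    using r_less_v1 by (auto simp: Fi_edges_def F0_edges_def complete_edges_def)
  then obtain t where "t < v1" "h = cycle_edge r v1 t" by (auto simp: cycle_edges_eq)
  with cycle_edge_pair_unique[OF v1_ge] \<open>0 \<in> h\<close> \<open>r - 1 \<in> h\<close> have "h = cycle_edge r v1 0" by auto
  with \<open>e = Pair i ` h\<close> \<open>i = 0\<close> show ?thesis by simp
qed

lemma sharpness_bigF: "sharpness E_F = 2"
proof (rule sharpness_eq_2)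
  show "finite f \<and> f \<noteq> {}" if "f \<in> E_F" for f
    using bigF_edge_complete[OF that] r_ge_2 by auto
  show "\<exists>f'\<in>E_F. f' \<noteq> f \<and> w \<in> f'" if "f \<in> E_F" "w \<in> f" for f w
    using bigF_two_edges that by blast
  let ?e = "Pair 0 ` cycle_edge r v1 0" and ?S = "Pair 0 ` {0, r - 1}"
  have "cycle_edge r v1 0 \<in> F0" using r_less_v1 by (auto simp: F0_edges_def cycle_edges_eq)
  then show "?e \<in> E_F" by (force simp: mem_bigF_edges Fi_edges_def)
  have "0 \<in> cycle_edge r v1 0" using r_ge_2 by (auto simp: mem_cycle_edge intro!: exI[of _ 0])
  moreover have "r - 1 \<in> cycle_edge r v1 0"
    using r_ge_2 r_less_v1 by (auto simp: mem_cycle_edge intro!: exI[of _ "r - 1"])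
  ultimately show "?S \<subseteq> ?e" by blast
  show "card ?S = 2" using r_ge_2 by (simp add: card_image)
  show "\<forall>e'\<in>E_F - {?e}. \<not> ?S \<subseteq> e'"
    using bigF_edge_containing_pair by auto
qed

lemma wsat_ge:
  assumes "r \<le> n"
  shows "n \<le> r * wsat r n V_F E_F"
proof -
  obtain H where "weakly_saturated (complete_edges r {..<n}) H V_F E_F" "card H = wsat r n V_F E_F"
    using wsat_attained by blast
  with weakly_saturated_card_ge[of E_F V_F r n H] bigF_edge_complete(1) bigF_two_edges r_ge_2 assms
  show ?thesis by simp
qed

text \<open>The components of F other than F_c are mapped injectively into A, avoiding the image
  of the given embedding; |A| \<ge> |V(F)| leaves enough room.\<close>

lemma copy_containing_bigF_from_component:
  assumes A: "finite A" "complete_edges r A \<subseteq> G" "card V_F \<le> card A"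
    and c: "c \<le> length es" and \<phi>: "embedding {..<v1 + v2} (Fi_edges r v1 v2 es c) G \<phi>"
    and f: "f \<in> Fi_edges r v1 v2 es c"
  shows "copy_containing V_F E_F G (\<phi> ` f)"
proof -
  define D where "D = ({0..length es} - {c}) \<times> {..<v1 + v2}"
  define A' where "A' = A - \<phi> ` {..<v1 + v2}"
  have "card D = length es * (v1 + v2)" using c by (simp add: D_def card_cartesian_product)
  also have "\<dots> \<le> card A - card (\<phi> ` {..<v1 + v2})"
    using A(3) card_image_le[of "{..<v1 + v2}" \<phi>] by (simp add: card_bigF_vertices algebra_simps)
  also have "\<dots> \<le> card A'" unfolding A'_def by (rule diff_card_le_card_Diff) simp
  finally obtain g where g: "g ` D \<subseteq> A'" "inj_on g D"
    using card_le_inj[of D A'] A(1) by (auto simp: D_def A'_def)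
  define \<psi> where "\<psi> p = (if fst p = c then \<phi> (snd p) else g p)" for p
  have \<psi>_c: "\<psi> ` Pair c ` h = \<phi> ` h" for h by (simp only: image_image) (simp add: \<psi>_def)
  have V_F: "V_F = Pair c ` {..<v1 + v2} \<union> D"
    using c by (auto simp: bigF_vertices_def D_def)
  have \<psi>_D: "\<psi> p = g p" if "p \<in> D" for p using that by (auto simp: \<psi>_def D_def)
  have "inj_on \<psi> (Pair c ` {..<v1 + v2})"
    using \<phi> by (auto simp: \<psi>_def embedding_def inj_on_def)
  moreover from \<psi>_D have "inj_on \<psi> D" "\<psi> ` D \<subseteq> A'" using g inj_on_cong[of D \<psi> g] by auto
  moreover have "\<psi> ` Pair c ` {..<v1 + v2} \<inter> A' = {}" unfolding \<psi>_c A'_def by auto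
  ultimately have "inj_on \<psi> V_F" unfolding V_F inj_on_Un by blast
  moreover have "\<psi> ` e \<in> G" if "e \<in> E_F" for e
  proof -
    obtain i h where i: "i \<le> length es" "h \<in> Fi_edges r v1 v2 es i" "e = Pair i ` h"
      using \<open>e \<in> E_F\<close> unfolding mem_bigF_edges by blast
    show ?thesis
    proof (cases "i = c")
      case True
      then show ?thesis using \<phi> i by (simp add: \<psi>_c embedding_def)
    next
      case False
      moreover have "h \<in> complete_edges r {..<v1 + v2}" using i(2) Fi_edges_complete by blast
      ultimately have "e \<subseteq> D" using i by (auto simp: D_def complete_edges_def)
      then have "\<psi> ` e = g ` e" using \<psi>_D by (intro image_cong) auto
      moreover have "e \<in> complete_edges r D"
        using \<open>e \<subseteq> D\<close> bigF_edge_complete[OF that] by (simp add: complete_edges_def)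
      then have "g ` e \<in> complete_edges r (g ` D)" by (rule image_complete_edges[OF g(2)])
      moreover have "complete_edges r (g ` D) \<subseteq> G"
        using g(1) A(2) complete_edges_mono[of "g ` D" A r] by (auto simp: A'_def)
      ultimately show ?thesis by auto
    qed
  qed
  moreover have "Pair c ` f \<in> E_F" using c f by (auto simp: mem_bigF_edges)
  ultimately show ?thesis
    unfolding copy_containing_iff embedding_def
    by (intro exI[of _ \<psi>] conjI bexI[of _ "Pair c ` f"]) (simp_all add: \<psi>_c)
qed

text \<open>The non-edges are added in the order of the list: when the image of es ! j is added, the
  embedding is one of F_(j+1), whose other edges are already present.\<close>

lemma saturates_to_add_nonedge_images:
  assumes A: "finite A" "complete_edges r A \<subseteq> G" "card V_F \<le> card A"
    and "finite V"
    and \<Phi>: "\<And>\<phi>. \<phi> \<in> \<Phi> \<Longrightarrow> embedding {..<v1 + v2} F0 G \<phi> \<and> \<phi> ` {..<v1 + v2} \<subseteq> V"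
  shows "saturates_to V_F E_F G (G \<union> {\<phi> ` d | \<phi> d. \<phi> \<in> \<Phi> \<and> d \<in> set es})"
proof -
  define G' where "G' j = G \<union> {\<phi> ` d | \<phi> d. \<phi> \<in> \<Phi> \<and> d \<in> set (take j es)}" for j
  have "saturates_to V_F E_F G (G' j)" if "j \<le> length es" for j
    using that
  proof (induction j)
    case 0
    show ?case by (simp add: G'_def saturates_to.refl)
  next
    case (Suc j)
    define E where "E = (\<lambda>\<phi>. \<phi> ` (es ! j)) ` \<Phi>"
    have take_Suc: "set (take (Suc j) es) = insert (es ! j) (set (take j es))"
      using Suc.prems by (simp add: take_Suc_conv_app_nth)
    have "es ! j \<subseteq> {..<v1 + v2}"
      using nth_mem[of j es] Suc.prems set_es by (auto simp: complete_edges_def)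
    then have "E \<subseteq> Pow V" using \<Phi> by (fastforce simp: E_def)
    then have "finite E" using \<open>finite V\<close> by (simp add: finite_subset)
    moreover have "copy_containing V_F E_F (insert e (G' j)) e" if "e \<in> E" for e
    proof -
      obtain \<phi> where "\<phi> \<in> \<Phi>" "e = \<phi> ` (es ! j)" using \<open>e \<in> E\<close> by (auto simp: E_def)
      have "embedding {..<v1 + v2} (Fi_edges r v1 v2 es (Suc j)) (insert e (G' j)) \<phi>"
        using \<Phi>[OF \<open>\<phi> \<in> \<Phi>\<close>] \<open>\<phi> \<in> \<Phi>\<close> \<open>e = _\<close>
        by (auto simp: embedding_def Fi_edges_def take_Suc G'_def)
      moreover have "es ! j \<in> Fi_edges r v1 v2 es (Suc j)" by (simp add: Fi_edges_def take_Suc)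
      moreover have "complete_edges r A \<subseteq> insert e (G' j)" using A(2) by (auto simp: G'_def)
      ultimately show ?thesis
        using copy_containing_bigF_from_component[OF A(1) _ A(3) Suc.prems] \<open>e = _\<close> by simp
    qed
    ultimately have "saturates_to V_F E_F (G' j) (G' j \<union> E)" by (rule saturates_to_insert_set)
    moreover have "G' j \<union> E = G' (Suc j)" by (auto simp: G'_def E_def take_Suc)
    ultimately show ?case using Suc saturates_to_trans by fastforce
  qed
  from this[of "length es"] show ?thesis by (simp add: G'_def)
qed

lemma saturates_to_complete_edges_if_covered:
  assumes A: "finite A" "complete_edges r A \<subseteq> G" "card V_F \<le> card A"
    and "finite V" and G: "G \<subseteq> complete_edges r V"
    and cover: "\<And>e. e \<in> complete_edges r V \<Longrightarrow>
      \<exists>\<phi>. embedding {..<v1 + v2} F0 G \<phi> \<and> \<phi> ` {..<v1 + v2} \<subseteq> V \<and> e \<subseteq> \<phi> ` {..<v1 + v2}"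
  shows "saturates_to V_F E_F G (complete_edges r V)"
proof -
  define \<Phi> where "\<Phi> = {\<phi>. embedding {..<v1 + v2} F0 G \<phi> \<and> \<phi> ` {..<v1 + v2} \<subseteq> V}"
  define X where "X = {\<phi> ` d | \<phi> d. \<phi> \<in> \<Phi> \<and> d \<in> set es}"
  have "saturates_to V_F E_F G (G \<union> X)"
    unfolding X_def by (rule saturates_to_add_nonedge_images[OF A \<open>finite V\<close>]) (simp add: \<Phi>_def)
  have "X \<subseteq> complete_edges r V"
  proof
    fix e assume "e \<in> X"
    then obtain \<phi> d where "\<phi> \<in> \<Phi>" "d \<in> set es" "e = \<phi> ` d" by (auto simp: X_def)
    then have "e \<in> complete_edges r (\<phi> ` {..<v1 + v2})"
      using set_es image_complete_edges[of \<phi> "{..<v1 + v2}" d r]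
      by (auto simp: \<Phi>_def embedding_def)
    then show "e \<in> complete_edges r V"
      using complete_edges_mono \<open>\<phi> \<in> \<Phi>\<close> by (auto simp: \<Phi>_def)
  qed
  moreover have "complete_edges r V \<subseteq> G \<union> X"
  proof
    fix e assume e: "e \<in> complete_edges r V"
    show "e \<in> G \<union> X"
    proof (cases "e \<in> G")
      case False
      obtain \<phi> where \<phi>: "\<phi> \<in> \<Phi>" "e \<subseteq> \<phi> ` {..<v1 + v2}"
        using cover[OF e] by (auto simp: \<Phi>_def)
      then obtain d where "d \<subseteq> {..<v1 + v2}" "e = \<phi> ` d" by (auto simp: subset_image_iff)
      moreover have "inj_on \<phi> {..<v1 + v2}" using \<phi>(1) by (simp add: \<Phi>_def embedding_def)
      ultimately have "d \<in> complete_edges r {..<v1 + v2}"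
        using e by (auto simp: complete_edges_def card_image inj_on_subset)
      moreover have "d \<notin> F0"
        using \<phi>(1) False \<open>e = \<phi> ` d\<close> by (auto simp: \<Phi>_def embedding_def)
      ultimately show ?thesis using \<phi>(1) \<open>e = \<phi> ` d\<close> set_es by (auto simp: X_def)
    qed simp
  qed
  ultimately have "G \<union> X = complete_edges r V" using G by auto
  with \<open>saturates_to V_F E_F G (G \<union> X)\<close> show ?thesis by simp
qed

lemma embedding_join_maps:
  assumes "inj_on \<alpha> {..<v1}" "inj_on \<beta> {..<v2}" "\<alpha> ` {..<v1} \<inter> \<beta> ` {..<v2} = {}"
    and cycle: "\<And>c. c \<in> cycle_edges r v1 \<Longrightarrow> \<alpha> ` c \<in> G"
    and clique: "complete_edges r (\<beta> ` {..<v2}) \<subseteq> G"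
  shows "embedding {..<v1 + v2} F0 G (join_maps v1 \<alpha> \<beta>)"
  unfolding embedding_def
proof
  show inj: "inj_on (join_maps v1 \<alpha> \<beta>) {..<v1 + v2}" using assms(1-3) by (rule inj_on_join_maps)
  show "\<forall>f\<in>F0. join_maps v1 \<alpha> \<beta> ` f \<in> G"
  proof
    fix f assume "f \<in> F0"
    then consider "f \<in> cycle_edges r v1" | "f \<in> complete_edges r {v1..<v1 + v2}"
      unfolding F0_edges_def by blast
    then show "join_maps v1 \<alpha> \<beta> ` f \<in> G"
    proof cases
      case 1
      then have "f \<subseteq> {..<v1}" using cycle_edges_complete[of r v1] r_less_v1
        by (auto simp: complete_edges_def)
      then show ?thesis using cycle[OF 1] by (simp add: join_maps_image_low)
    next
      case 2
      have "inj_on (join_maps v1 \<alpha> \<beta>) {v1..<v1 + v2}" using inj by (rule inj_on_subset) auto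
      from image_complete_edges[OF this 2] show ?thesis
        using clique by (auto simp: join_maps_image_high)
    qed
  qed
qed

lemma saturates_to_complete_edges_Un:
  assumes A: "finite A" "complete_edges r A \<subseteq> G" "card V_F \<le> card A"
    and B: "finite B" "A \<inter> B = {}" and G: "G \<subseteq> complete_edges r (A \<union> B)"
    and cycles: "\<And>S. S \<subseteq> B \<Longrightarrow> card S \<le> r \<Longrightarrow> \<exists>\<alpha>. inj_on \<alpha> {..<v1} \<and> S \<subseteq> \<alpha> ` {..<v1}
      \<and> \<alpha> ` {..<v1} \<subseteq> B \<and> (\<forall>c\<in>cycle_edges r v1. \<alpha> ` c \<in> G)"
  shows "saturates_to V_F E_F G (complete_edges r (A \<union> B))"
proof (rule saturates_to_complete_edges_if_covered[OF A _ G])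
  show "finite (A \<union> B)" using A(1) B(1) by simp
  fix e assume e: "e \<in> complete_edges r (A \<union> B)"
  then have "finite e" "card (e \<inter> A) \<le> r" "card (e \<inter> B) \<le> r"
    using A(1) B(1) by (auto simp: complete_edges_def intro: finite_subset card_mono)
  obtain \<alpha> where \<alpha>: "inj_on \<alpha> {..<v1}" "e \<inter> B \<subseteq> \<alpha> ` {..<v1}" "\<alpha> ` {..<v1} \<subseteq> B"
    "\<forall>c\<in>cycle_edges r v1. \<alpha> ` c \<in> G"
    using cycles[of "e \<inter> B"] \<open>card (e \<inter> B) \<le> r\<close> by auto
  have "v2 \<le> card A" using A(3) by (rule order_trans[rotated]) (simp add: card_bigF_vertices)
  then obtain \<beta> where \<beta>: "inj_on \<beta> {..<v2}" "e \<inter> A \<subseteq> \<beta> ` {..<v2}" "\<beta> ` {..<v2} \<subseteq> A"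
    using exists_inj_on_lessThan_covering[OF A(1), of "e \<inter> A" v2] \<open>card (e \<inter> A) \<le> r\<close> v2_ge
    by auto
  have "embedding {..<v1 + v2} F0 G (join_maps v1 \<alpha> \<beta>)"
  proof (rule embedding_join_maps)
    show "\<alpha> ` {..<v1} \<inter> \<beta> ` {..<v2} = {}" using \<alpha>(3) \<beta>(3) B(2) by auto
    show "complete_edges r (\<beta> ` {..<v2}) \<subseteq> G" using \<beta>(3) A(2) complete_edges_mono by blast
  qed (use \<alpha> \<beta> in auto)
  moreover have "join_maps v1 \<alpha> \<beta> ` {..<v1 + v2} = \<alpha> ` {..<v1} \<union> \<beta> ` {..<v2}"
    by (rule join_maps_image)
  ultimately show "\<exists>\<phi>. embedding {..<v1 + v2} F0 G \<phi> \<and> \<phi> ` {..<v1 + v2} \<subseteq> A \<union> B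
      \<and> e \<subseteq> \<phi> ` {..<v1 + v2}"
    using \<alpha> \<beta> e by (intro exI[of _ "join_maps v1 \<alpha> \<beta>"]) (auto simp: complete_edges_def)
qed

lemma saturates_to_two_cliques:
  assumes "card V_F \<le> a" "v1 \<le> b"
  shows "saturates_to V_F E_F (complete_edges r {..<a} \<union> complete_edges r {a..<a + b})
    (complete_edges r {..<a + b})"
proof -
  let ?G = "complete_edges r {..<a} \<union> complete_edges r {a..<a + b}"
  have "saturates_to V_F E_F ?G (complete_edges r ({..<a} \<union> {a..<a + b}))"
  proof (rule saturates_to_complete_edges_Un)
    show "?G \<subseteq> complete_edges r ({..<a} \<union> {a..<a + b})" by (simp add: complete_edges_mono)
    fix S assume "S \<subseteq> {a..<a + b}" "card S \<le> r"
    then obtain \<alpha> where \<alpha>: "inj_on \<alpha> {..<v1}" "S \<subseteq> \<alpha> ` {..<v1}" "\<alpha> ` {..<v1} \<subseteq> {a..<a + b}"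
      using exists_inj_on_lessThan_covering[of "{a..<a + b}" S v1] r_less_v1 assms(2) by auto
    have "\<alpha> ` c \<in> ?G" if "c \<in> cycle_edges r v1" for c
      using image_complete_edges[OF \<alpha>(1)] cycle_edges_complete[of r v1] r_less_v1 that
        complete_edges_mono[OF \<alpha>(3)] by fastforce
    with \<alpha> show "\<exists>\<alpha>. inj_on \<alpha> {..<v1} \<and> S \<subseteq> \<alpha> ` {..<v1} \<and> \<alpha> ` {..<v1} \<subseteq> {a..<a + b}
        \<and> (\<forall>c\<in>cycle_edges r v1. \<alpha> ` c \<in> ?G)" by blast
  qed (use assms(1) in auto)
  moreover have "{..<a} \<union> {a..<a + b} = {..<a + b}" by auto
  ultimately show ?thesis by simp
qed

lemma wsat_subadditive:
  assumes "card V_F \<le> a" "v1 \<le> b"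
  shows "wsat r (a + b) V_F E_F \<le> wsat r a V_F E_F + wsat r b V_F E_F"
proof -
  obtain H1 where H1: "saturates_to V_F E_F H1 (complete_edges r {..<a})" "card H1 = wsat r a V_F E_F"
    using wsat_attained[of r a V_F E_F] by (auto simp: weakly_saturated_iff)
  obtain H2 where H2: "saturates_to V_F E_F H2 (complete_edges r {..<b})" "card H2 = wsat r b V_F E_F"
    using wsat_attained[of r b V_F E_F] by (auto simp: weakly_saturated_iff)
  define H2' where "H2' = image ((+) a) ` H2"
  have "saturates_to V_F E_F H2' (complete_edges r {a..<a + b})"
    using saturates_to_image[OF _ H2(1), of "(+) a"]
    by (simp add: H2'_def complete_edges_image[symmetric] shift_lessThan)
  then have "saturates_to V_F E_F (complete_edges r {..<a} \<union> H2')
      (complete_edges r {..<a} \<union> complete_edges r {a..<a + b})"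
    using saturates_to_Un by (metis sup_commute)
  moreover have "saturates_to V_F E_F (H1 \<union> H2') (complete_edges r {..<a} \<union> H2')"
    by (rule saturates_to_Un[OF H1(1)])
  ultimately have "weakly_saturated (complete_edges r {..<a + b}) (H1 \<union> H2') V_F E_F"
    unfolding weakly_saturated_iff by (metis saturates_to_trans saturates_to_two_cliques assms)
  then have "wsat r (a + b) V_F E_F \<le> card (H1 \<union> H2')" by (rule wsat_le)
  also have "\<dots> \<le> card H1 + card H2'" by (rule card_Un_le)
  also have "\<dots> \<le> card H1 + card H2"
    using saturates_to_subset[OF H2(1)] finite_complete_edges[of "{..<b}" r]
    by (simp add: H2'_def card_image_le finite_subset)
  finally show ?thesis using H1(2) H2(2) by simp
qed

lemma embedding_F0_clique_cycle:
  assumes "inj_on \<beta> {..<v2}" "\<beta> ` {..<v2} \<subseteq> {..<a}"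
  shows "embedding {..<v1 + v2} F0 (complete_edges r {..<a} \<union> image ((+) a) ` cycle_edges r v1)
    (join_maps v1 ((+) a) \<beta>)"
  using complete_edges_mono[OF assms(2)] assms
  by (intro embedding_join_maps) auto

lemma saturates_to_clique_cycle:
  assumes "card V_F \<le> a"
  shows "saturates_to V_F E_F (complete_edges r {..<a} \<union> image ((+) a) ` cycle_edges r v1)
    (complete_edges r {..<a + v1})"
proof -
  let ?G = "complete_edges r {..<a} \<union> image ((+) a) ` cycle_edges r v1"
  have "saturates_to V_F E_F ?G (complete_edges r ({..<a} \<union> {a..<a + v1}))"
  proof (rule saturates_to_complete_edges_Un)
    have "image ((+) a) ` cycle_edges r v1 \<subseteq> complete_edges r {a..<a + v1}"
      using image_complete_edges[of "(+) a" "{..<v1}"] cycle_edges_complete[of r v1] r_less_v1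
      by (fastforce simp: shift_lessThan)
    then show "?G \<subseteq> complete_edges r ({..<a} \<union> {a..<a + v1})"
      using complete_edges_mono[of _ "{..<a} \<union> {a..<a + v1}" r] by blast
    show "\<exists>\<alpha>. inj_on \<alpha> {..<v1} \<and> S \<subseteq> \<alpha> ` {..<v1} \<and> \<alpha> ` {..<v1} \<subseteq> {a..<a + v1}
        \<and> (\<forall>c\<in>cycle_edges r v1. \<alpha> ` c \<in> ?G)" if "S \<subseteq> {a..<a + v1}" for S
      using that by (intro exI[of _ "(+) a"]) (auto simp: shift_lessThan)
  qed (use assms in auto)
  moreover have "{..<a} \<union> {a..<a + v1} = {..<a + v1}" by auto
  ultimately show ?thesis by simp
qed

text \<open>A clique together with all but one edge of a disjoint cycle forces the missing cycle edge,
  which completes a copy of F_0: the cycle costs one edge less than its number of vertices.\<close>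

lemma saturates_to_clique_cycle_minus_edge:
  assumes "card V_F \<le> a"
  defines "C \<equiv> image ((+) a) ` cycle_edges r v1" and "e0 \<equiv> (+) a ` cycle_edge r v1 0"
  shows "saturates_to V_F E_F (complete_edges r {..<a} \<union> (C - {e0})) (complete_edges r {..<a} \<union> C)"
proof -
  have "cycle_edge r v1 0 \<in> cycle_edges r v1" using r_less_v1 by (auto simp: cycle_edges_eq)
  then have "e0 \<in> C" by (simp add: C_def e0_def)
  obtain \<beta> where \<beta>: "inj_on \<beta> {..<v2}" "\<beta> ` {..<v2} \<subseteq> {..<a}"
    using exists_inj_on_lessThan_covering[of "{..<a}" "{}" v2] assms(1)
    by (auto simp: card_bigF_vertices)
  have "copy_containing V_F E_F (complete_edges r {..<a} \<union> C) (join_maps v1 ((+) a) \<beta> ` cycle_edge r v1 0)"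
  proof (rule copy_containing_bigF_from_component[of "{..<a}"])
    show "embedding {..<v1 + v2} (Fi_edges r v1 v2 es 0) (complete_edges r {..<a} \<union> C)
        (join_maps v1 ((+) a) \<beta>)"
      using embedding_F0_clique_cycle[OF \<beta>] by (simp add: C_def Fi_edges_def)
    show "cycle_edge r v1 0 \<in> Fi_edges r v1 v2 es 0"
      using \<open>cycle_edge r v1 0 \<in> cycle_edges r v1\<close> by (simp add: Fi_edges_def F0_edges_def)
  qed (use assms(1) in auto)
  moreover have "join_maps v1 ((+) a) \<beta> ` cycle_edge r v1 0 = e0"
    using \<open>cycle_edge r v1 0 \<in> cycle_edges r v1\<close> cycle_edges_complete[of r v1] r_less_v1
    by (subst join_maps_image_low) (auto simp: e0_def complete_edges_def)
  moreover have "complete_edges r {..<a} \<union> C = insert e0 (complete_edges r {..<a} \<union> (C - {e0}))"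
    using \<open>e0 \<in> C\<close> by auto
  ultimately show ?thesis using saturates_to.step[OF saturates_to.refl] by metis
qed

lemma wsat_add_cycle:
  assumes "card V_F \<le> a"
  shows "wsat r (a + v1) V_F E_F + 1 \<le> wsat r a V_F E_F + v1"
proof -
  obtain H where H: "saturates_to V_F E_F H (complete_edges r {..<a})" "card H = wsat r a V_F E_F"
    using wsat_attained[of r a V_F E_F] by (auto simp: weakly_saturated_iff)
  define C where "C = image ((+) a) ` cycle_edges r v1"
  define e0 where "e0 = (+) a ` cycle_edge r v1 0"
  have "saturates_to V_F E_F (H \<union> (C - {e0})) (complete_edges r {..<a} \<union> (C - {e0}))"
    by (rule saturates_to_Un[OF H(1)])
  then have "weakly_saturated (complete_edges r {..<a + v1}) (H \<union> (C - {e0})) V_F E_F"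
    using saturates_to_clique_cycle_minus_edge[OF assms] saturates_to_clique_cycle[OF assms]
    unfolding weakly_saturated_iff C_def e0_def by (metis saturates_to_trans)
  then have "wsat r (a + v1) V_F E_F \<le> card (H \<union> (C - {e0}))" by (rule wsat_le)
  moreover have "card (H \<union> (C - {e0})) \<le> card H + card (C - {e0})" by (rule card_Un_le)
  moreover have "e0 \<in> C" using r_less_v1 by (auto simp: C_def e0_def cycle_edges_eq)
  then have "card (C - {e0}) + 1 = card C"
    using card_Suc_Diff1[of C e0] by (simp add: C_def cycle_edges_eq)
  moreover have "card C \<le> v1"
    using card_image_le[of "cycle_edges r v1" "image ((+) a)"] card_image_le[of "{..<v1}" "cycle_edge r v1"]
    by (simp add: C_def cycle_edges_eq)
  ultimately show ?thesis using H(2) by linarith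
qed

lemma wsat_add_cycles:
  assumes "card V_F \<le> a"
  shows "wsat r (a + t * v1) V_F E_F + t \<le> wsat r a V_F E_F + t * v1"
proof (induction t)
  case (Suc t)
  have "wsat r (a + t * v1 + v1) V_F E_F + 1 \<le> wsat r (a + t * v1) V_F E_F + v1"
    using assms by (intro wsat_add_cycle) simp
  with Suc.IH show ?case by (simp add: algebra_simps)
qed simp

lemma exists_wsat_ratio_less: "\<exists>n\<ge>card V_F. real (wsat r n V_F E_F) / real n < 1"
proof -
  define t where "t = wsat r (card V_F) V_F E_F + 1"
  define n where "n = card V_F + t * v1"
  have "wsat r n V_F E_F < n" "0 < n"
    using wsat_add_cycles[of "card V_F" t] r_less_v1 by (simp_all add: n_def t_def)
  then have "real (wsat r n V_F E_F) / real n < 1" by simp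
  then show ?thesis by (intro exI[of _ n]) (simp add: n_def)
qed

lemma wsat_ratio_ge: "r \<le> n \<Longrightarrow> 1 / real r \<le> real (wsat r n V_F E_F) / real n"
  using of_nat_mono[OF wsat_ge] r_ge_2 by (simp add: field_simps)

lemma wsat_ratio_converges:
  "\<exists>L. (\<lambda>n. real (wsat r n V_F E_F) / real n) \<longlonglongrightarrow> L \<and>
    (\<forall>n\<ge>card V_F. L \<le> real (wsat r n V_F E_F) / real n)"
proof (rule Fekete_subadditive)
  show "0 < card V_F" using v2_ge by (simp add: card_bigF_vertices)
  show "real (wsat r (a + b) V_F E_F) \<le> real (wsat r a V_F E_F) + real (wsat r b V_F E_F)"
    if "card V_F \<le> a" "card V_F \<le> b" for a b
  proof -
    have "v1 \<le> b" using that(2) by (simp add: card_bigF_vertices)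
    with wsat_subadditive[OF that(1)] show ?thesis using of_nat_mono by fastforce
  qed
qed simp

end

theorem claim3:
  fixes r v1 v2 :: nat and es :: "nat set list"
  assumes "r \<ge> 3" and "v1 \<ge> 2 * r - 1" and "v2 \<ge> r + 1"
    and "distinct es"
    and "set es = complete_edges r {..<v1 + v2} - F0_edges r v1 v2"
  shows "sharpness (bigF_edges r v1 v2 es) = 2 \<and>
    (\<exists>L::real. (\<lambda>n. real (wsat r n (bigF_vertices v1 v2 es) (bigF_edges r v1 v2 es)) / real n)
        \<longlonglongrightarrow> L \<and> 0 < L \<and> L < 1)"
proof -
  \<comment> \<open>the enumeration of the non-edges need not be repetition-free\<close>
  interpret cycle_clique_family r v1 v2 es
    using assms(1-3,5) by unfold_locales auto
  obtain L where lim: "(\<lambda>n. real (wsat r n V_F E_F) / real n) \<longlonglongrightarrow> L"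
    and L_le: "\<forall>n\<ge>card V_F. L \<le> real (wsat r n V_F E_F) / real n"
    using wsat_ratio_converges by blast
  have "0 < 1 / real r" using r_ge_2 by simp
  also have "1 / real r \<le> L" using wsat_ratio_ge by (intro LIMSEQ_le_const[OF lim]) auto
  finally have "0 < L" .
  moreover have "L < 1" using exists_wsat_ratio_less L_le by fastforce
  ultimately show ?thesis using lim sharpness_bigF by blast
qed

end
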